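(* For every real $x\ge0$, $$\left|Q_{odd}(x)-\frac4{\pi^2}x\right|\le\frac12\sqrt x+1\qquad\text{and}\qquad\left|Q_{odd}(x)-\frac4{\pi^2}x\right|\le\Big(\frac2{\pi^2}+\frac14\Big)\sqrt x+\frac14x^{1/4}+2.$$
   Context: $Q_{odd}(x)$ denotes the number of odd squarefree positive integers $n\le x$. *)

theory Defs
  imports "HOL-Analysis.Analysis" "HOL-Computational_Algebra.Squarefree"
begin

definition Q_odd :: "real \<Rightarrow> nat" where
  "Q_odd x = card {n::nat. 0 < n \<and> real n \<le> x \<and> odd n \<and> squarefree n}"

end

theory Submission
  imports Defs
begin

text \<open>
  Writing the indicator of squarefreeness as \<open>\<Sum>d\<^sup>2 dvd n. \<mu> d\<close> and swapping the sums gives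
  \<open>Q_odd x = \<Sum>d odd, d \<le> \<surd>x. \<mu> d * N (x / d\<^sup>2)\<close>, where \<open>N t\<close> counts the odd numbers up to \<open>t\<close>
  and differs from \<open>t / 2\<close> by at most \<open>1/2\<close>. The series \<open>\<Sum>d odd. \<mu> d / d\<^sup>2\<close> is the reciprocal of
  \<open>\<Sum>m odd. 1 / m\<^sup>2 = \<pi>\<^sup>2 / 8\<close>, so replacing each \<open>N (x / d\<^sup>2)\<close> by \<open>x / (2 d\<^sup>2)\<close> yields \<open>4 x / \<pi>\<^sup>2\<close>
  up to the tail \<open>x / 2 * \<Sum>d odd, d > \<surd>x. \<mu> d / d\<^sup>2\<close>, which is at most \<open>(\<surd>x + 3) / 4\<close>.
  Only squarefree \<open>d\<close> contribute to the remaining error, so it is at most \<open>Q_odd \<surd>x / 2\<close>.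
  Bounding \<open>Q_odd \<surd>x\<close> trivially by \<open>(\<surd>x + 1) / 2\<close> gives the first estimate, and bounding it
  by the first estimate at \<open>\<surd>x\<close> gives the second.
\<close>

lemma sum_Pow_alternating_eq_0:
  assumes "finite A" "A \<noteq> {}"
  shows "(\<Sum>S\<in>Pow A. (-1) ^ card S) = (0 :: 'a :: ring_1)"
proof (rule sum_alternating_cancels)
  show "card {S \<in> Pow A. even (card S)} = card {S \<in> Pow A. odd (card S)}"
    using card_subsupersets_even_odd[of A "{}"] assms by auto
qed (use assms in simp)

lemma abs_summable_on_Times_mult:
  fixes f g :: "_ \<Rightarrow> 'a :: {real_normed_div_algebra, banach}"
  assumes "f abs_summable_on A" "g abs_summable_on B"
  shows "(\<lambda>(x, y). f x * g y) abs_summable_on A \<times> B"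
proof (subst Infinite_Sum.abs_summable_on_Sigma_iff, intro conjI ballI)
  show "(\<lambda>y. norm ((\<lambda>(x, y). f x * g y) (x, y))) summable_on B" for x
    using summable_on_cmult_right[OF assms(2), of "norm (f x)"] by (simp add: norm_mult)
  have "infsum (\<lambda>y. norm ((\<lambda>(x, y). f x * g y) (x, y))) B = norm (f x) * infsum (\<lambda>y. norm (g y)) B" for x
    by (simp add: norm_mult infsum_cmult_right')
  thus "(\<lambda>x. norm (infsum (\<lambda>y. norm ((\<lambda>(x, y). f x * g y) (x, y))) B)) summable_on A"
    using summable_on_cmult_left[OF assms(1)] by (simp add: infsum_nonneg)
qed

lemma has_sum_Times_mult:
  fixes f g :: "_ \<Rightarrow> 'a :: {real_normed_div_algebra, banach}"
  assumes "(f has_sum S) A" "(g has_sum T) B" "f abs_summable_on A" "g abs_summable_on B"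
  shows "((\<lambda>(x, y). f x * g y) has_sum S * T) (A \<times> B)"
proof -
  let ?F = "\<lambda>(x, y). f x * g y"
  have "?F summable_on A \<times> B"
    using abs_summable_on_Times_mult[OF assms(3,4)] by (rule abs_summable_summable)
  hence F: "(?F has_sum infsum ?F (A \<times> B)) (A \<times> B)" by simp
  have "((\<lambda>y. f x * g y) has_sum f x * T) B" for x
    using assms(2) by (rule has_sum_cmult_right)
  hence "((\<lambda>x. f x * T) has_sum infsum ?F (A \<times> B)) A"
    by (intro has_sum_SigmaD[OF F]) simp
  moreover have "((\<lambda>x. f x * T) has_sum S * T) A"
    using assms(1) by (rule has_sum_cmult_left)
  ultimately show ?thesis using F has_sum_unique by metis
qed

lemma finite_nat_le_real: "finite {n::nat. real n \<le> y}"
  by (rule finite_subset[of _ "{..nat \<lfloor>y\<rfloor>}"]) (auto simp: le_nat_floor)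

lemma of_nat_le_sqrt_iff: "real d \<le> sqrt x \<longleftrightarrow> real (d\<^sup>2) \<le> x"
proof
  assume d: "real d \<le> sqrt x"
  hence "x \<ge> 0" using of_nat_0_le_iff order.trans real_sqrt_ge_0_iff by blast
  thus "real (d\<^sup>2) \<le> x" using power_mono[OF d, of 2] by simp
qed (simp add: real_le_rsqrt)

section \<open>The sum of the inverse odd squares\<close>

lemma has_sum_inverse_odd_squares:
  "((\<lambda>m::nat. 1 / real m ^ 2) has_sum pi\<^sup>2 / 8) {m. odd m}"
proof -
  let ?f = "\<lambda>m::nat. 1 / real m ^ 2"
  have Suc: "bij_betw Suc UNIV {0<..}"
    by (rule bij_betwI[where g = "\<lambda>n. n - 1"]) auto
  have pos: "(?f has_sum pi\<^sup>2 / 6) {0<..}"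
    unfolding has_sum_reindex_bij_betw[OF Suc, symmetric] using inverse_squares_sums
    by (intro sums_nonneg_imp_has_sum) (auto simp: add.commute)
  have double: "bij_betw (\<lambda>n::nat. 2 * n) {0<..} {m. 0 < m \<and> even m}"
    by (rule bij_betwI[where g = "\<lambda>m. m div 2"]) auto
  have even: "(?f has_sum pi\<^sup>2 / 24) {m. 0 < m \<and> even m}"
    unfolding has_sum_reindex_bij_betw[OF double, symmetric]
    using has_sum_cmult_right[OF pos, of "1 / 4"] by simp
  have "(?f has_sum pi\<^sup>2 / 6 - pi\<^sup>2 / 24) ({0<..} - {m. 0 < m \<and> even m})"
    by (rule has_sum_Diff[OF pos even]) auto
  moreover have "{0<..} - {m. 0 < m \<and> even m} = {m::nat. odd m}"
    using odd_pos by auto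
  ultimately show ?thesis by simp
qed

lemma summable_on_inverse_odd_squares:
  "(\<lambda>m::nat. 1 / real m ^ 2) summable_on {m. odd m}"
  using has_sum_inverse_odd_squares by (auto simp: summable_on_def)

lemma inverse_odd_square_le_telescoping:
  assumes "j \<ge> 1"
  shows "1 / (2 * real j + 1)\<^sup>2 \<le> 1 / (4 * real j) - 1 / (4 * real (Suc j))"
proof -
  have "1 / (4 * real j) - 1 / (4 * real (Suc j)) = 1 / (4 * real j * (real j + 1))"
    using assms by (simp add: field_simps)
  moreover have "4 * real j * (real j + 1) \<le> (2 * real j + 1)\<^sup>2"
    by (simp add: power2_eq_square algebra_simps)
  ultimately show ?thesis
    using assms by (simp add: frac_le)
qed

lemma sum_inverse_odd_squares_le:
  assumes "k \<ge> 1"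
  shows "(\<Sum>j = k..<k + n. 1 / (2 * real j + 1)\<^sup>2) \<le> 1 / (4 * real k)"
proof -
  have "(\<Sum>j = k..<k + n. 1 / (2 * real j + 1)\<^sup>2) \<le> (\<Sum>j = k..<k + n. 1 / (4 * real j) - 1 / (4 * real (Suc j)))"
    using assms by (intro sum_mono inverse_odd_square_le_telescoping) auto
  also have "\<dots> = 1 / (4 * real k) - 1 / (4 * real (k + n))"
    using sum_Suc_diff'[of k "k + n" "\<lambda>j. - 1 / (4 * real j)"] by simp
  also have "\<dots> \<le> 1 / (4 * real k)" by simp
  finally show ?thesis .
qed

lemma infsum_inverse_odd_squares_ge_le:
  assumes "k \<ge> 1"
  shows "infsum (\<lambda>d::nat. 1 / real d ^ 2) {d. odd d \<and> 2 * k + 1 \<le> d} \<le> 1 / (4 * real k)"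
proof (rule infsum_le_finite_sums)
  show "(\<lambda>d::nat. 1 / real d ^ 2) summable_on {d. odd d \<and> 2 * k + 1 \<le> d}"
    using summable_on_inverse_odd_squares by (rule summable_on_subset_banach) auto
  fix F assume F: "finite F" "F \<subseteq> {d. odd d \<and> 2 * k + 1 \<le> d}"
  obtain n where n: "\<And>d. d \<in> F \<Longrightarrow> d < n" using F(1) finite_nat_bounded by blast
  have "F \<subseteq> (\<lambda>j. 2 * j + 1) ` {k..<k + n}"
  proof
    fix d assume d: "d \<in> F"
    have "odd d" using d F(2) by auto
    then obtain j where "d = 2 * j + 1" by (rule oddE)
    thus "d \<in> (\<lambda>j. 2 * j + 1) ` {k..<k + n}" using d n[OF d] F(2) by fastforce
  qed
  hence "sum (\<lambda>d. 1 / real d ^ 2) F \<le> sum (\<lambda>d. 1 / real d ^ 2) ((\<lambda>j. 2 * j + 1) ` {k..<k + n})"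
    by (intro sum_mono2) auto
  also have "\<dots> = (\<Sum>j = k..<k + n. 1 / (2 * real j + 1)\<^sup>2)"
    by (subst sum.reindex) (auto simp: inj_on_def add.commute)
  also have "\<dots> \<le> 1 / (4 * real k)" using assms by (rule sum_inverse_odd_squares_le)
  finally show "sum (\<lambda>d. 1 / real d ^ 2) F \<le> 1 / (4 * real k)" .
qed

lemma infsum_inverse_odd_squares_tail_le:
  assumes y: "y \<ge> 1"
  shows "infsum (\<lambda>d::nat. 1 / real d ^ 2) {d. odd d \<and> y < real d} \<le> (y + 3) / (2 * y\<^sup>2)"
proof -
  define k where "k = nat \<lfloor>(y - 1) / 2\<rfloor> + 1"
  have "real k = of_int \<lfloor>(y - 1) / 2\<rfloor> + 1" using y by (simp add: k_def)
  hence k: "k \<ge> 1" "y - 1 < 2 * real k" "2 * real k \<le> y + 1"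
    using real_of_int_floor_add_one_gt[of "(y - 1) / 2"] of_int_floor_le[of "(y - 1) / 2"]
    by (auto simp: k_def field_simps)
  have "y < real (2 * j + 1) \<longleftrightarrow> k \<le> j" for j
  proof
    assume "y < real (2 * j + 1)"
    hence "real k < real (j + 1)" using k by simp
    thus "k \<le> j" by (simp only: of_nat_less_iff)
  next
    assume "k \<le> j"
    hence "real k \<le> real j" by simp
    thus "y < real (2 * j + 1)" using k by simp
  qed
  hence "odd d \<Longrightarrow> y < real d \<longleftrightarrow> 2 * k + 1 \<le> d" for d
    by (elim oddE) simp
  hence "{d. odd d \<and> y < real d} = {d. odd d \<and> 2 * k + 1 \<le> d}" by blast
  hence "infsum (\<lambda>d::nat. 1 / real d ^ 2) {d. odd d \<and> y < real d} \<le> 1 / (4 * real k)"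
    using infsum_inverse_odd_squares_ge_le[OF k(1)] by simp
  also have "1 / (4 * real k) \<le> (y + 3) / (2 * y\<^sup>2)"
  proof -
    have "y\<^sup>2 \<le> 2 * real k * (y + 3)"
    proof (cases "2 * y \<ge> 3")
      case True
      have "y\<^sup>2 \<le> (y - 1) * (y + 3)" using True by (simp add: power2_eq_square algebra_simps)
      also have "\<dots> \<le> 2 * real k * (y + 3)" using k y by (intro mult_right_mono) auto
      finally show ?thesis .
    next
      case False
      have "y\<^sup>2 \<le> 2 * y" using False y by (simp add: power2_eq_square)
      also have "\<dots> \<le> 2 * (y + 3)" by simp
      also have "\<dots> \<le> 2 * real k * (y + 3)" using k y by (intro mult_right_mono) auto
      finally show ?thesis .
    qed
    thus ?thesis using k y by (simp add: field_simps)
  qed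
  finally show ?thesis .
qed

section \<open>The Moebius function\<close>

definition moebius_mu :: "nat \<Rightarrow> real" where
  "moebius_mu n = (if squarefree n then (-1) ^ card (prime_factors n) else 0)"

lemma abs_moebius_mu_le: "\<bar>moebius_mu n\<bar> \<le> 1"
  by (simp add: moebius_mu_def)

lemma prime_factors_Prod_subset:
  assumes "S \<subseteq> prime_factors (n::nat)"
  shows "prime_factors (\<Prod>S) = S"
proof -
  have fin: "finite S" using assms finite_subset by blast
  have primes: "\<And>p. p \<in> S \<Longrightarrow> prime p" using assms by (auto intro: in_prime_factors_imp_prime)
  hence "0 \<notin> S" by force
  hence "prime_factors (\<Prod>S) = (\<Union>p\<in>S. prime_factors p)"
    using prime_factors_prod[OF fin, of id] by simp
  also have "\<dots> = S" using primes by (auto simp: prime_prime_factors)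
  finally show ?thesis .
qed

lemma squarefree_eq_prod_prime_factors:
  assumes "squarefree (n::nat)" "n \<noteq> 0"
  shows "n = \<Prod>(prime_factors n)"
proof -
  have "n = (\<Prod>p\<in>prime_factors n. p ^ multiplicity p n)"
    using assms(2) by (subst prod_prime_factors) auto
  also have "\<dots> = \<Prod>(prime_factors n)"
    using squarefree_factorial_semiring'[OF assms(2)] assms(1) by (intro prod.cong) auto
  finally show ?thesis .
qed

lemma bij_betw_Prod_squarefree_divisors:
  assumes "n \<noteq> (0::nat)"
  shows "bij_betw Prod (Pow (prime_factors n)) {d. d dvd n \<and> squarefree d}"
proof (rule bij_betwI[where g = prime_factors])
  show "Prod \<in> Pow (prime_factors n) \<rightarrow> {d. d dvd n \<and> squarefree d}"
  proof
    fix S assume S: "S \<in> Pow (prime_factors n)"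
    have primes: "\<And>p. p \<in> S \<Longrightarrow> prime p" using S by (auto intro: in_prime_factors_imp_prime)
    have "\<Prod>S dvd \<Prod>(prime_factors n)" using S by (intro prod_dvd_prod_subset) auto
    also have "\<dots> dvd (\<Prod>p\<in>prime_factors n. p ^ multiplicity p n)"
      using assms by (intro prod_dvd_prod dvd_power) (auto simp: prime_factors_multiplicity)
    also have "\<dots> = n" using assms by (simp add: prod_prime_factors)
    finally have "\<Prod>S dvd n" .
    moreover have "squarefree (\<Prod>S)"
      using primes by (intro squarefree_prod_coprime) (auto intro: primes_coprime squarefree_prime)
    ultimately show "\<Prod>S \<in> {d. d dvd n \<and> squarefree d}" by simp
  qed
  show "prime_factors \<in> {d. d dvd n \<and> squarefree d} \<rightarrow> Pow (prime_factors n)"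
    using assms by (auto intro: dvd_prime_factors[THEN subsetD])
  show "prime_factors (\<Prod>S) = S" if "S \<in> Pow (prime_factors n)" for S
    using that by (simp add: prime_factors_Prod_subset)
  show "\<Prod>(prime_factors d) = d" if "d \<in> {d. d dvd n \<and> squarefree d}" for d
    using that assms squarefree_eq_prod_prime_factors by force
qed

lemma sum_moebius_mu_divisors:
  assumes "n \<noteq> (0::nat)"
  shows "(\<Sum>d | d dvd n. moebius_mu d) = (if n = 1 then 1 else 0)"
proof -
  have "(\<Sum>d | d dvd n. moebius_mu d) = (\<Sum>d | d dvd n \<and> squarefree d. moebius_mu d)"
    using assms by (intro sum.mono_neutral_right) (auto simp: moebius_mu_def)
  also have "\<dots> = (\<Sum>S\<in>Pow (prime_factors n). moebius_mu (\<Prod>S))"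
    by (rule sum.reindex_bij_betw[OF bij_betw_Prod_squarefree_divisors[OF assms], symmetric])
  also have "\<dots> = (\<Sum>S\<in>Pow (prime_factors n). (-1) ^ card S)"
    using bij_betw_Prod_squarefree_divisors[OF assms]
    by (intro sum.cong) (auto simp: moebius_mu_def bij_betw_def prime_factors_Prod_subset)
  also have "\<dots> = (if n = 1 then 1 else 0)"
    using assms sum_Pow_alternating_eq_0[of "prime_factors n"]
    by (auto simp: prime_factorization_empty_iff set_mset_eq_empty_iff)
  finally show ?thesis .
qed

lemma squarefree_iff_square_part_eq_1:
  assumes "n \<noteq> (0::nat)"
  shows "squarefree n \<longleftrightarrow> square_part n = 1"
proof -
  have "squarefree n \<longleftrightarrow> (\<forall>x. x dvd square_part n \<longrightarrow> x dvd 1)"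
    by (simp add: squarefree_def dvd_square_part_iff)
  also have "\<dots> \<longleftrightarrow> square_part n = 1" by (metis dvd_refl dvd_trans dvd_1_iff_1 one_dvd)
  finally show ?thesis .
qed

lemma sum_moebius_mu_square_divisors:
  assumes "n \<noteq> (0::nat)"
  shows "(\<Sum>d | d\<^sup>2 dvd n. moebius_mu d) = (if squarefree n then 1 else 0)"
proof -
  have "(\<Sum>d | d\<^sup>2 dvd n. moebius_mu d) = (\<Sum>d | d dvd square_part n. moebius_mu d)"
    by (simp add: dvd_square_part_iff)
  also have "\<dots> = (if square_part n = 1 then 1 else 0)"
    using assms by (intro sum_moebius_mu_divisors) simp
  finally show ?thesis using assms by (simp add: squarefree_iff_square_part_eq_1)
qed

lemma bij_betw_odd_divisor_pairs:
  "bij_betw (\<lambda>(d, m). (d * m, d)) ({d::nat. odd d} \<times> {m::nat. odd m}) (SIGMA n:{n. odd n}. {d. d dvd n})"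
proof (rule bij_betwI[where g = "\<lambda>(n, d). (d, n div d)"])
  show "(\<lambda>(n, d). (d, n div d)) \<in> (SIGMA n:{n::nat. odd n}. {d. d dvd n}) \<rightarrow> {d. odd d} \<times> {m. odd m}"
    by (auto elim!: dvdE split: if_splits)
qed (auto intro: odd_pos)

lemma abs_summable_moebius_odd:
  "(\<lambda>d. norm (moebius_mu d / real d ^ 2)) summable_on {d. odd d}"
proof (rule Infinite_Sum.abs_summable_on_comparison_test)
  show "(\<lambda>d::nat. norm (1 / real d ^ 2)) summable_on {d. odd d}"
    using summable_on_inverse_odd_squares by simp
qed (simp add: abs_moebius_mu_le divide_right_mono)

lemma has_sum_moebius_odd:
  "((\<lambda>d. moebius_mu d / real d ^ 2) has_sum 8 / pi\<^sup>2) {d. odd d}"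
proof -
  \<comment> \<open>Multiplying the two series and grouping the terms by \<open>n = d * m\<close> turns the product
    into \<open>\<Sum>n. (\<Sum>d dvd n. \<mu> d) / n\<^sup>2 = 1\<close>.\<close>
  let ?a = "\<lambda>d. moebius_mu d / real d ^ 2" and ?b = "\<lambda>m::nat. 1 / real m ^ 2"
    and ?H = "\<lambda>(n, d). moebius_mu d / real n ^ 2"
  let ?M = "infsum ?a {d. odd d}"
  have a: "(?a has_sum ?M) {d. odd d}"
    using abs_summable_summable[OF abs_summable_moebius_odd] by simp
  have "((\<lambda>(d, m). ?a d * ?b m) has_sum ?M * (pi\<^sup>2 / 8)) ({d. odd d} \<times> {m. odd m})"
  proof (rule has_sum_Times_mult[OF a has_sum_inverse_odd_squares abs_summable_moebius_odd])
    show "(\<lambda>m. norm (?b m)) summable_on {m. odd m}"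
      using summable_on_inverse_odd_squares by simp
  qed
  moreover have "(\<lambda>(d, m). ?a d * ?b m) = (\<lambda>x. ?H ((\<lambda>(d, m). (d * m, d)) x))"
    by (auto simp: power_mult_distrib)
  ultimately have "(?H has_sum ?M * (pi\<^sup>2 / 8)) (SIGMA n:{n. odd n}. {d. d dvd n})"
    by (simp flip: has_sum_reindex_bij_betw[OF bij_betw_odd_divisor_pairs])
  moreover have "((\<lambda>d. ?H (n, d)) has_sum (if n = 1 then 1 else 0)) {d. d dvd n}"
    if "n \<in> {n. odd n}" for n
  proof (rule has_sum_finiteI)
    have "0 < n" using that by (simp add: odd_pos)
    thus "finite {d. d dvd n}" "(if n = 1 then 1 else 0) = (\<Sum>d | d dvd n. ?H (n, d))"
      by (simp_all add: finite_divisors_nat sum_moebius_mu_divisors flip: sum_divide_distrib)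
  qed
  ultimately have "((\<lambda>n. if n = 1 then 1 else 0) has_sum ?M * (pi\<^sup>2 / 8)) {n::nat. odd n}"
    by (rule has_sum_SigmaD)
  moreover have "((\<lambda>n::nat. if n = 1 then 1 else 0) has_sum 1) {n. odd n}"
    by (subst has_sum_cong_neutral[where T = "{1}" and g = "\<lambda>n. if n = 1 then 1 else 0"]) (auto intro: has_sum_finiteI)
  ultimately have "?M * (pi\<^sup>2 / 8) = 1" by (rule has_sum_unique)
  hence "?M = 8 / pi\<^sup>2" by (simp add: field_simps)
  thus ?thesis using a by simp
qed

lemma abs_infsum_moebius_odd_tail_le:
  assumes "y \<ge> 1"
  shows "\<bar>infsum (\<lambda>d. moebius_mu d / real d ^ 2) {d. odd d \<and> y < real d}\<bar> \<le> (y + 3) / (2 * y\<^sup>2)"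
proof -
  let ?T = "{d. odd d \<and> y < real d}"
  have abs_summable: "(\<lambda>d. norm (moebius_mu d / real d ^ 2)) summable_on ?T"
    using abs_summable_moebius_odd by (rule summable_on_subset_banach) auto
  have "\<bar>infsum (\<lambda>d. moebius_mu d / real d ^ 2) ?T\<bar> \<le> infsum (\<lambda>d. norm (moebius_mu d / real d ^ 2)) ?T"
    using norm_infsum_bound[OF abs_summable] by simp
  also have "\<dots> \<le> infsum (\<lambda>d::nat. 1 / real d ^ 2) ?T"
  proof (rule infsum_mono[OF abs_summable])
    show "(\<lambda>d::nat. 1 / real d ^ 2) summable_on ?T"
      using summable_on_inverse_odd_squares by (rule summable_on_subset_banach) auto
  qed (simp add: abs_moebius_mu_le divide_right_mono)
  also have "\<dots> \<le> (y + 3) / (2 * y\<^sup>2)"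
    using assms by (rule infsum_inverse_odd_squares_tail_le)
  finally show ?thesis .
qed

section \<open>Counting odd squarefree numbers\<close>

definition odd_count :: "real \<Rightarrow> nat" where
  "odd_count y = card {m::nat. odd m \<and> real m \<le> y}"

lemma odd_count_eq:
  assumes "y \<ge> 0"
  shows "odd_count y = nat \<lfloor>(y + 1) / 2\<rfloor>"
proof -
  let ?K = "nat \<lfloor>(y + 1) / 2\<rfloor>"
  have K: "k < ?K \<longleftrightarrow> 2 * real k + 1 \<le> y" for k
  proof -
    have "k < ?K \<longleftrightarrow> int k + 1 \<le> \<lfloor>(y + 1) / 2\<rfloor>"
      unfolding zless_nat_eq_int_zless by linarith
    also have "\<dots> \<longleftrightarrow> real k + 1 \<le> (y + 1) / 2"
      by (simp only: le_floor_iff) simp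
    also have "\<dots> \<longleftrightarrow> 2 * real k + 1 \<le> y"
      by (simp add: field_simps)
    finally show ?thesis .
  qed
  have "{m::nat. odd m \<and> real m \<le> y} = (\<lambda>k. 2 * k + 1) ` {..<?K}"
  proof (intro equalityI subsetI)
    fix m assume "m \<in> {m::nat. odd m \<and> real m \<le> y}"
    then obtain k where "m = 2 * k + 1" "2 * real k + 1 \<le> y" by (auto elim: oddE)
    thus "m \<in> (\<lambda>k. 2 * k + 1) ` {..<?K}" using K by blast
  next
    fix m assume "m \<in> (\<lambda>k. 2 * k + 1) ` {..<?K}"
    then obtain k where "m = 2 * k + 1" "k < ?K" by blast
    thus "m \<in> {m::nat. odd m \<and> real m \<le> y}" using K by simp
  qed
  thus ?thesis unfolding odd_count_def by (simp add: card_image inj_on_def)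
qed

lemma odd_count_approx:
  assumes "y \<ge> 0"
  shows "\<bar>real (odd_count y) - y / 2\<bar> \<le> 1 / 2"
proof -
  have "real (odd_count y) = of_int \<lfloor>(y + 1) / 2\<rfloor>"
    using assms by (simp add: odd_count_eq)
  thus ?thesis
    using of_int_floor_le[of "(y + 1) / 2"] real_of_int_floor_add_one_gt[of "(y + 1) / 2"]
    by (simp add: abs_le_iff field_simps)
qed

lemma odd_count_multiples:
  assumes "odd k"
  shows "card {n::nat. odd n \<and> real n \<le> x \<and> k dvd n} = odd_count (x / real k)"
proof -
  have k: "real k > 0" using assms by (simp add: odd_pos)
  have "{n. odd n \<and> real n \<le> x \<and> k dvd n} = (\<lambda>m. k * m) ` {m. odd m \<and> real m \<le> x / real k}"
  proof (intro equalityI subsetI)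
    fix n assume n: "n \<in> {n. odd n \<and> real n \<le> x \<and> k dvd n}"
    then obtain m where "n = k * m" by (auto elim: dvdE)
    thus "n \<in> (\<lambda>m. k * m) ` {m. odd m \<and> real m \<le> x / real k}" using n k by (auto simp: field_simps)
  next
    fix n assume "n \<in> (\<lambda>m. k * m) ` {m. odd m \<and> real m \<le> x / real k}"
    then obtain m where "n = k * m" "odd m" "real m \<le> x / real k" by auto
    thus "n \<in> {n. odd n \<and> real n \<le> x \<and> k dvd n}" using assms k by (auto simp: field_simps)
  qed
  moreover have "inj (\<lambda>m. k * m)" using k by (simp add: inj_on_def)
  ultimately show ?thesis unfolding odd_count_def by (simp add: card_image inj_on_subset)
qed

lemma square_divisors_of_odd:
  assumes "odd n" "real n \<le> x"
  shows "{d. d\<^sup>2 dvd n} = {d. odd d \<and> real d \<le> sqrt x \<and> d\<^sup>2 dvd n}"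
proof (intro equalityI subsetI)
  fix d assume "d \<in> {d. d\<^sup>2 dvd n}"
  hence d: "d\<^sup>2 dvd n" by simp
  hence "d\<^sup>2 \<le> n" using assms(1) by (intro dvd_imp_le) (auto simp: odd_pos)
  hence "real (d\<^sup>2) \<le> x" using assms(2) by (meson of_nat_le_iff order_trans)
  hence "real d \<le> sqrt x" by (simp only: of_nat_le_sqrt_iff)
  moreover have "odd d" using d assms(1) by (auto simp: power2_eq_square elim: dvd_mult_left)
  ultimately show "d \<in> {d. odd d \<and> real d \<le> sqrt x \<and> d\<^sup>2 dvd n}" using d by simp
qed auto

lemma Q_odd_eq_sum_moebius:
  "real (Q_odd x) = (\<Sum>d | odd d \<and> real d \<le> sqrt x. moebius_mu d * real (odd_count (x / real d ^ 2)))"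
proof -
  let ?A = "{n::nat. odd n \<and> real n \<le> x}" and ?D = "{d::nat. odd d \<and> real d \<le> sqrt x}"
  have fin_A: "finite ?A" and fin_D: "finite ?D"
    by (auto intro: finite_subset[OF _ finite_nat_le_real])
  have "{n. 0 < n \<and> real n \<le> x \<and> odd n \<and> squarefree n} = {n \<in> ?A. squarefree n}"
    by (auto simp: odd_pos)
  hence "real (Q_odd x) = (\<Sum>n\<in>?A. if squarefree n then 1 else 0)"
    using fin_A by (simp add: Q_odd_def sum.If_cases Int_def)
  also have "\<dots> = (\<Sum>n\<in>?A. \<Sum>d\<in>{d \<in> ?D. d\<^sup>2 dvd n}. moebius_mu d)"
  proof (intro sum.cong refl)
    fix n assume n: "n \<in> ?A"
    hence "{d \<in> ?D. d\<^sup>2 dvd n} = {d. d\<^sup>2 dvd n}" using square_divisors_of_odd by auto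
    thus "(if squarefree n then 1 else 0) = (\<Sum>d\<in>{d \<in> ?D. d\<^sup>2 dvd n}. moebius_mu d)"
      using n by (simp add: odd_pos sum_moebius_mu_square_divisors)
  qed
  also have "\<dots> = (\<Sum>d\<in>?D. \<Sum>n\<in>{n \<in> ?A. d\<^sup>2 dvd n}. moebius_mu d)"
    by (rule sum.swap_restrict[OF fin_A fin_D])
  also have "\<dots> = (\<Sum>d\<in>?D. moebius_mu d * real (odd_count (x / real d ^ 2)))"
    by (intro sum.cong refl) (simp add: odd_count_multiples flip: of_nat_power)
  finally show ?thesis .
qed

lemma Q_odd_error_eq:
  "real (Q_odd x) - 4 / pi\<^sup>2 * x =
     (\<Sum>d | odd d \<and> real d \<le> sqrt x. moebius_mu d * (real (odd_count (x / real d ^ 2)) - x / real d ^ 2 / 2))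
     - x / 2 * infsum (\<lambda>d. moebius_mu d / real d ^ 2) {d. odd d \<and> sqrt x < real d}"
proof -
  let ?a = "\<lambda>d. moebius_mu d / real d ^ 2" and ?D = "{d::nat. odd d \<and> real d \<le> sqrt x}"
  have fin_D: "finite ?D" by (auto intro: finite_subset[OF _ finite_nat_le_real])
  have "(?a has_sum 8 / pi\<^sup>2 - sum ?a ?D) ({d. odd d} - ?D)"
    using fin_D by (intro has_sum_Diff has_sum_moebius_odd has_sum_finite) auto
  moreover have "{d. odd d} - ?D = {d. odd d \<and> sqrt x < real d}" by auto
  ultimately have "infsum ?a {d. odd d \<and> sqrt x < real d} = 8 / pi\<^sup>2 - sum ?a ?D"
    by (simp add: infsumI)
  hence "4 / pi\<^sup>2 * x = x / 2 * (sum ?a ?D + infsum ?a {d. odd d \<and> sqrt x < real d})"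
    by simp
  moreover have "(\<Sum>d\<in>?D. moebius_mu d * (real (odd_count (x / real d ^ 2)) - x / real d ^ 2 / 2))
      = (\<Sum>d\<in>?D. moebius_mu d * real (odd_count (x / real d ^ 2))) - x / 2 * sum ?a ?D"
    by (simp add: right_diff_distrib sum_subtractf sum_distrib_left mult_ac)
  ultimately show ?thesis
    by (simp add: Q_odd_eq_sum_moebius algebra_simps)
qed

lemma abs_sum_moebius_odd_count_error_le:
  assumes "x \<ge> 0"
  shows "\<bar>\<Sum>d | odd d \<and> real d \<le> sqrt x. moebius_mu d * (real (odd_count (x / real d ^ 2)) - x / real d ^ 2 / 2)\<bar>
    \<le> real (Q_odd (sqrt x)) / 2"
proof -
  let ?D = "{d::nat. odd d \<and> real d \<le> sqrt x}"
  have fin_D: "finite ?D" by (auto intro: finite_subset[OF _ finite_nat_le_real])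
  have "\<bar>\<Sum>d\<in>?D. moebius_mu d * (real (odd_count (x / real d ^ 2)) - x / real d ^ 2 / 2)\<bar>
      \<le> (\<Sum>d\<in>?D. if squarefree d then 1 / 2 else 0)"
  proof (rule order.trans[OF sum_abs sum_mono])
    fix d assume "d \<in> ?D"
    have "\<bar>real (odd_count (x / real d ^ 2)) - x / real d ^ 2 / 2\<bar> \<le> 1 / 2"
      using assms by (intro odd_count_approx) simp
    thus "\<bar>moebius_mu d * (real (odd_count (x / real d ^ 2)) - x / real d ^ 2 / 2)\<bar>
        \<le> (if squarefree d then 1 / 2 else 0)"
      by (simp add: moebius_mu_def abs_mult)
  qed
  also have "\<dots> = real (card {d \<in> ?D. squarefree d}) / 2"
    using fin_D by (simp add: sum.If_cases Int_def)
  also have "{d \<in> ?D. squarefree d} = {n. 0 < n \<and> real n \<le> sqrt x \<and> odd n \<and> squarefree n}"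
    by (auto simp: odd_pos)
  finally show ?thesis by (simp add: Q_odd_def)
qed

lemma abs_Q_odd_error_le:
  assumes "x \<ge> 1"
  shows "\<bar>real (Q_odd x) - 4 / pi\<^sup>2 * x\<bar> \<le> real (Q_odd (sqrt x)) / 2 + (sqrt x + 3) / 4"
proof -
  let ?T = "infsum (\<lambda>d. moebius_mu d / real d ^ 2) {d. odd d \<and> sqrt x < real d}"
  have T: "\<bar>?T\<bar> \<le> (sqrt x + 3) / (2 * x)"
    using assms abs_infsum_moebius_odd_tail_le[of "sqrt x"] by simp
  have "\<bar>x / 2 * ?T\<bar> = x / 2 * \<bar>?T\<bar>"
    using assms by (simp add: abs_mult)
  also have "\<dots> \<le> x / 2 * ((sqrt x + 3) / (2 * x))"
    using T assms by (intro mult_left_mono) auto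
  also have "\<dots> = (sqrt x + 3) / 4"
    using assms by (simp add: field_simps)
  finally have "\<bar>x / 2 * ?T\<bar> \<le> (sqrt x + 3) / 4" .
  moreover have "x \<ge> 0" using assms by simp
  ultimately show ?thesis
    using Q_odd_error_eq[of x] abs_sum_moebius_odd_count_error_le[of x] by linarith
qed

lemma Q_odd_le:
  assumes "y \<ge> 0"
  shows "real (Q_odd y) \<le> y / 2 + 1 / 2"
proof -
  have "Q_odd y \<le> odd_count y"
    unfolding Q_odd_def odd_count_def by (intro card_mono finite_subset[OF _ finite_nat_le_real]) auto
  thus ?thesis using odd_count_approx[OF assms] by linarith
qed

lemma abs_Q_odd_error_le_1:
  assumes "0 \<le> x" "x < 1"
  shows "\<bar>real (Q_odd x) - 4 / pi\<^sup>2 * x\<bar> \<le> 1"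
proof -
  have empty: "{n::nat. 0 < n \<and> real n \<le> x \<and> odd n \<and> squarefree n} = {}"
  proof (intro equals0I)
    fix n assume "n \<in> {n::nat. 0 < n \<and> real n \<le> x \<and> odd n \<and> squarefree n}"
    hence "1 \<le> real n" "real n \<le> x" by auto
    thus False using assms(2) by linarith
  qed
  hence "Q_odd x = 0" unfolding Q_odd_def empty by simp
  moreover have "4 / pi\<^sup>2 \<le> 1"
    using pi_gt3 power_mono[of 3 pi 2] by simp
  ultimately show ?thesis
    using assms mult_mono[of "4 / pi\<^sup>2" 1 x 1] by simp
qed

lemma abs_Q_odd_error_le_sqrt:
  assumes "x \<ge> 0"
  shows "\<bar>real (Q_odd x) - 4 / pi\<^sup>2 * x\<bar> \<le> 1 / 2 * sqrt x + 1"
proof (cases "x < 1")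
  case True
  thus ?thesis using abs_Q_odd_error_le_1[OF assms True] real_sqrt_ge_zero[OF assms] by linarith
next
  case False
  hence x: "x \<ge> 1" by simp
  have "real (Q_odd (sqrt x)) \<le> sqrt x / 2 + 1 / 2"
    using assms by (intro Q_odd_le) simp
  hence "real (Q_odd (sqrt x)) / 2 + (sqrt x + 3) / 4 \<le> 1 / 2 * sqrt x + 1" by argo
  with abs_Q_odd_error_le[OF x] show ?thesis by (rule order.trans)
qed

lemma abs_Q_odd_error_le_fourth_root:
  assumes "x \<ge> 0"
  shows "\<bar>real (Q_odd x) - 4 / pi\<^sup>2 * x\<bar> \<le> (2 / pi\<^sup>2 + 1/4) * sqrt x + 1/4 * x powr (1/4) + 2"
proof (cases "x < 1")
  case True
  have "0 \<le> (2 / pi\<^sup>2 + 1/4) * sqrt x" "0 \<le> 1/4 * x powr (1/4)"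
    using assms by simp_all
  thus ?thesis using abs_Q_odd_error_le_1[OF assms True] by linarith
next
  case False
  hence x: "x \<ge> 1" by simp
  have "sqrt (sqrt x) = x powr (1/4)"
    using assms by (simp add: powr_half_sqrt[symmetric] powr_powr)
  hence "real (Q_odd (sqrt x)) \<le> 4 / pi\<^sup>2 * sqrt x + 1/2 * x powr (1/4) + 1"
    using abs_Q_odd_error_le_sqrt[of "sqrt x"] assms unfolding abs_le_iff by simp
  moreover have "(2 / pi\<^sup>2 + 1/4) * sqrt x = 1/2 * (4 / pi\<^sup>2 * sqrt x) + sqrt x / 4"
    by (simp add: algebra_simps)
  ultimately have "real (Q_odd (sqrt x)) / 2 + (sqrt x + 3) / 4
      \<le> (2 / pi\<^sup>2 + 1/4) * sqrt x + 1/4 * x powr (1/4) + 2"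
    by argo
  with abs_Q_odd_error_le[OF x] show ?thesis by (rule order.trans)
qed

theorem lemma6:
  fixes x :: real
  assumes "x \<ge> 0"
  shows "\<bar>real (Q_odd x) - 4 / pi\<^sup>2 * x\<bar> \<le> 1/2 * sqrt x + 1
    \<and> \<bar>real (Q_odd x) - 4 / pi\<^sup>2 * x\<bar> \<le> (2 / pi\<^sup>2 + 1/4) * sqrt x + 1/4 * x powr (1/4) + 2"
  using abs_Q_odd_error_le_sqrt[OF assms] abs_Q_odd_error_le_fourth_root[OF assms] by simp

end
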